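(* Let $P=\Bbbk[x_1,x_2,x_3]$ with Poisson bracket $\{x_1,x_2\}=0$, $\{x_2,x_3\}=2x_1x_2$, $\{x_3,x_1\}=x_1^2$. If $G$ is a nontrivial finite subgroup of $\mathrm{PAut}_{\mathrm{gr}}(P)$ generated by Poisson reflections, then $P^G$ is not isomorphic to $P$ as Poisson algebras.
   Context: $\Bbbk$ is algebraically closed of characteristic $0$; $P$ has the standard grading. $\mathrm{PAut}_{\mathrm{gr}}(P)$ is the group of degree-preserving bijective algebra homomorphisms preserving the bracket. A Poisson reflection is a finite-order $\phi\in\mathrm{PAut}_{\mathrm{gr}}(P)$ such that $\phi|_{P_1}$ has eigenvalues $1,1,\xi$ with $\xi\neq1$ a primitive root of unity. $P^G$ is the subalgebra of $G$-invariants with the restricted bracket. *)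

theory Defs
  imports "HOL-Library.Product_Plus" "HOL-Library.Poly_Mapping"
          "HOL-Computational_Algebra.Polynomial" "Jordan_Normal_Form.Char_Poly"
begin

text \<open>The polynomial ring k[x1,x2,x3]: finitely supported maps from exponent
 triples (a,b,c) (the monomial x1^a x2^b x3^c) to coefficients.\<close>
type_synonym 'k P3 = "(nat \<times> nat \<times> nat) \<Rightarrow>\<^sub>0 'k"

definition alg_closed_type :: "'k::field itself \<Rightarrow> bool" where
  "alg_closed_type _ \<longleftrightarrow> (\<forall>p::'k poly. 0 < degree p \<longrightarrow> (\<exists>z. poly p z = 0))"

definition X1 :: "'k::comm_ring_1 P3" where "X1 = Poly_Mapping.single (1,0,0) 1"
definition X2 :: "'k::comm_ring_1 P3" where "X2 = Poly_Mapping.single (0,1,0) 1"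
definition X3 :: "'k::comm_ring_1 P3" where "X3 = Poly_Mapping.single (0,0,1) 1"

definition const :: "'k::comm_ring_1 \<Rightarrow> 'k P3" where
  "const c = Poly_Mapping.single (0,0,0) c"

definition pd1 :: "'k::comm_ring_1 P3 \<Rightarrow> 'k P3" where
  "pd1 f = (\<Sum>m\<in>Poly_Mapping.keys f. case m of (a,b,c) \<Rightarrow>
            Poly_Mapping.single (a - 1, b, c) (of_nat a * Poly_Mapping.lookup f m))"
definition pd2 :: "'k::comm_ring_1 P3 \<Rightarrow> 'k P3" where
  "pd2 f = (\<Sum>m\<in>Poly_Mapping.keys f. case m of (a,b,c) \<Rightarrow>
            Poly_Mapping.single (a, b - 1, c) (of_nat b * Poly_Mapping.lookup f m))"
definition pd3 :: "'k::comm_ring_1 P3 \<Rightarrow> 'k P3" where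
  "pd3 f = (\<Sum>m\<in>Poly_Mapping.keys f. case m of (a,b,c) \<Rightarrow>
            Poly_Mapping.single (a, b, c - 1) (of_nat c * Poly_Mapping.lookup f m))"

text \<open>The Poisson bracket determined by {x1,x2}=0, {x2,x3}=2x1x2, {x3,x1}=x1^2
  via the Leibniz rule:
  {f,g} = sum_{i,j} d_i f d_j g {x_i,x_j}.\<close>
definition pb :: "'k::comm_ring_1 P3 \<Rightarrow> 'k P3 \<Rightarrow> 'k P3" where
  "pb f g = (pd1 f * pd2 g - pd2 f * pd1 g) * 0
          + (pd2 f * pd3 g - pd3 f * pd2 g) * (2 * X1 * X2)
          + (pd3 f * pd1 g - pd1 f * pd3 g) * (X1 ^ 2)"

definition homogeneous :: "nat \<Rightarrow> 'k::comm_ring_1 P3 \<Rightarrow> bool" where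
  "homogeneous d f \<longleftrightarrow> (\<forall>m\<in>Poly_Mapping.keys f. case m of (a,b,c) \<Rightarrow> a + b + c = d)"

definition is_alg_hom :: "('k::comm_ring_1 P3 \<Rightarrow> 'k P3) \<Rightarrow> bool" where
  "is_alg_hom \<phi> \<longleftrightarrow> (\<forall>f g. \<phi> (f + g) = \<phi> f + \<phi> g) \<and> (\<forall>f g. \<phi> (f * g) = \<phi> f * \<phi> g)
     \<and> (\<forall>c f. \<phi> (const c * f) = const c * \<phi> f) \<and> \<phi> 1 = 1"

definition PAut_gr :: "('k::comm_ring_1 P3 \<Rightarrow> 'k P3) set" where
  "PAut_gr = {\<phi>. bij \<phi> \<and> is_alg_hom \<phi> \<and> (\<forall>d f. homogeneous d f \<longrightarrow> homogeneous d (\<phi> f))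
                 \<and> (\<forall>f g. \<phi> (pb f g) = pb (\<phi> f) (\<phi> g))}"

text \<open>Matrix of phi restricted to P_1 w.r.t. basis x1,x2,x3
  (column j = coordinates of phi(x_{j+1})).\<close>
definition var :: "nat \<Rightarrow> nat \<times> nat \<times> nat" where
  "var i = (if i = 0 then (1,0,0) else if i = 1 then (0,1,0) else (0,0,1))"

definition lin_part :: "('k::comm_ring_1 P3 \<Rightarrow> 'k P3) \<Rightarrow> 'k mat" where
  "lin_part \<phi> = mat 3 3 (\<lambda>(i,j). Poly_Mapping.lookup (\<phi> (Poly_Mapping.single (var j) 1)) (var i))"

definition poisson_reflection :: "('k::field P3 \<Rightarrow> 'k P3) \<Rightarrow> bool" where
  "poisson_reflection \<phi> \<longleftrightarrow> \<phi> \<in> PAut_gr \<and> (\<exists>n>0. \<phi> ^^ n = id) \<and>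
     (\<exists>\<xi>. \<xi> \<noteq> 1 \<and> (\<exists>n>0. \<xi> ^ n = 1) \<and>
          char_poly (lin_part \<phi>) = [:-1, 1:] ^ 2 * [:-\<xi>, 1:])"

inductive_set gen_group :: "('a \<Rightarrow> 'a) set \<Rightarrow> ('a \<Rightarrow> 'a) set" for S where
  gen_id: "id \<in> gen_group S"
| gen_base: "s \<in> S \<Longrightarrow> s \<in> gen_group S"
| gen_comp: "a \<in> gen_group S \<Longrightarrow> b \<in> gen_group S \<Longrightarrow> a \<circ> b \<in> gen_group S"
| gen_inv: "a \<in> gen_group S \<Longrightarrow> inv_into UNIV a \<in> gen_group S"

definition finite_subgroup_PAut :: "('k::comm_ring_1 P3 \<Rightarrow> 'k P3) set \<Rightarrow> bool" where
  "finite_subgroup_PAut G \<longleftrightarrow> finite G \<and> G \<subseteq> PAut_gr \<and> id \<in> G \<and>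
     (\<forall>a\<in>G. \<forall>b\<in>G. a \<circ> b \<in> G) \<and> (\<forall>a\<in>G. inv_into UNIV a \<in> G)"

definition invariants :: "('k::comm_ring_1 P3 \<Rightarrow> 'k P3) set \<Rightarrow> 'k P3 set" where
  "invariants G = {f. \<forall>g\<in>G. g f = f}"

definition poisson_iso_to_P :: "'k::comm_ring_1 P3 set \<Rightarrow> bool" where
  "poisson_iso_to_P A \<longleftrightarrow> (\<exists>\<psi> :: 'k P3 \<Rightarrow> 'k P3. bij_betw \<psi> A UNIV \<and>
     (\<forall>f\<in>A. \<forall>g\<in>A. \<psi> (f + g) = \<psi> f + \<psi> g \<and> \<psi> (f * g) = \<psi> f * \<psi> g
                  \<and> \<psi> (pb f g) = pb (\<psi> f) (\<psi> g)) \<and>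
     (\<forall>c. \<forall>f\<in>A. \<psi> (const c * f) = const c * \<psi> f) \<and> \<psi> 1 = 1)"

end

(*
  A graded Poisson automorphism of P is triangular on the variables: it scales x1 and x2 and
  sends x3 to a x1 + b x2 + l x3, where l is also its scalar on x1.  For a Poisson reflection
  l = 1, so a group G generated by reflections fixes x1 and acts on x2 through a character whose
  exponent m is at least 2.  The Poisson centre of P is k[z] with z = x1^2 x2, and its G-invariant
  elements lie in k[z^m].  If psi : P^G -> P were a Poisson isomorphism, then psi^-1(z) = H(z^m)
  for a polynomial H, while psi(z^m) = F(z) is central in P.  Hence z = H(F(z)), so F has
  degree 1 and psi(x1)^(2m) psi(x2^m) = c0 + c1 z with c1 /= 0.  Since 2m >= 4, comparing
  leading monomials forces psi(x1) to be a constant, contradicting injectivity of psi.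
*)

theory Submission
  imports Defs "HOL-Library.Product_Lexorder"
begin

(* With the lexicographic order on exponent triples, the library instance for poly_mapping
   makes P an integral domain, and leading monomials become additive. *)
instance prod :: ("{ordered_cancel_comm_monoid_add, linorder}", "{ordered_cancel_comm_monoid_add, linorder}")
    ordered_cancel_comm_monoid_add
proof
  fix a b c :: "'a \<times> 'b"
  assume "a \<le> b"
  then show "c + a \<le> c + b"
    by (cases a; cases b; cases c) (auto simp: le_less add_strict_left_mono)
qed

(* Jordan_Normal_Form makes One_nat_def a simp rule, which would rewrite exponents 1 to Suc 0. *)
declare One_nat_def [simp del]

section \<open>Leading monomials\<close>

definition lead_monom :: "('a::linorder \<Rightarrow>\<^sub>0 'b::zero) \<Rightarrow> 'a" where
  "lead_monom f = Max (Poly_Mapping.keys f)"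

lemma lead_monom_in_keys: "f \<noteq> 0 \<Longrightarrow> lead_monom f \<in> Poly_Mapping.keys f"
  unfolding lead_monom_def by simp

lemma le_lead_monom: "k \<in> Poly_Mapping.keys f \<Longrightarrow> k \<le> lead_monom f"
  unfolding lead_monom_def by simp

lemma lookup_lead_monom_nonzero: "f \<noteq> 0 \<Longrightarrow> Poly_Mapping.lookup f (lead_monom f) \<noteq> 0"
  using lead_monom_in_keys by (simp add: in_keys_iff)

lemma lookup_mult_lead_monom:
  fixes f g :: "'a::{ordered_cancel_comm_monoid_add, linorder} \<Rightarrow>\<^sub>0 'b::semiring_0"
  assumes "f \<noteq> 0" "g \<noteq> 0"
  shows "Poly_Mapping.lookup (f * g) (lead_monom f + lead_monom g) =
           Poly_Mapping.lookup f (lead_monom f) * Poly_Mapping.lookup g (lead_monom g)"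
proof -
  let ?k = "lead_monom f + lead_monom g"
  have only_top: "a = lead_monom f \<and> b = lead_monom g"
    if "?k = a + b" "Poly_Mapping.lookup f a * Poly_Mapping.lookup g b \<noteq> 0" for a b
  proof -
    have "a \<in> Poly_Mapping.keys f" "b \<in> Poly_Mapping.keys g"
      using that(2) by (auto simp: in_keys_iff)
    then have "a \<le> lead_monom f" "b \<le> lead_monom g"
      by (auto intro: le_lead_monom)
    then show ?thesis
      using that(1) by (metis add_less_le_mono add_le_less_mono order_neq_le_trans less_irrefl)
  qed
  have "Poly_Mapping.lookup (f * g) k =
      Sum_any (\<lambda>(a, b). Poly_Mapping.lookup f a * Poly_Mapping.lookup g b when k = a + b)" for k
    by transfer (simp add: prod_fun_unfold_prod)
  also have "\<dots> ?k = Sum_any (\<lambda>ab.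
      (case ab of (a, b) \<Rightarrow> Poly_Mapping.lookup f a * Poly_Mapping.lookup g b)
        when ab = (lead_monom f, lead_monom g))"
    by (rule Sum_any.cong) (auto simp: when_def split: if_splits dest: only_top)
  also have "\<dots> = Poly_Mapping.lookup f (lead_monom f) * Poly_Mapping.lookup g (lead_monom g)"
    by (simp only: Sum_any_when_equal prod.case)
  finally show ?thesis .
qed

lemma lead_monom_mult:
  fixes f g :: "'a::{ordered_cancel_comm_monoid_add, linorder} \<Rightarrow>\<^sub>0 'b::semiring_no_zero_divisors"
  assumes "f \<noteq> 0" "g \<noteq> 0"
  shows "lead_monom (f * g) = lead_monom f + lead_monom g"
proof (rule antisym)
  have "lead_monom f + lead_monom g \<in> Poly_Mapping.keys (f * g)"
    using lookup_mult_lead_monom[OF assms] lookup_lead_monom_nonzero[OF assms(1)]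
      lookup_lead_monom_nonzero[OF assms(2)] by (simp add: in_keys_iff)
  then show "lead_monom f + lead_monom g \<le> lead_monom (f * g)"
    by (rule le_lead_monom)
  have "f * g \<noteq> 0" using assms by simp
  then obtain a b where "lead_monom (f * g) = a + b" "a \<in> Poly_Mapping.keys f" "b \<in> Poly_Mapping.keys g"
    using keys_mult lead_monom_in_keys by blast
  then show "lead_monom (f * g) \<le> lead_monom f + lead_monom g"
    by (simp add: add_mono le_lead_monom)
qed

lemma lookup_single_mult_add:
  fixes g :: "'a::cancel_comm_monoid_add \<Rightarrow>\<^sub>0 'b::semiring_0"
  shows "Poly_Mapping.lookup (Poly_Mapping.single m v * g) (m + k) = v * Poly_Mapping.lookup g k"
  by (simp add: lookup_mult lookup_single when_mult)

lemma lookup_single_mult_eq_0: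
  fixes g :: "'a::cancel_comm_monoid_add \<Rightarrow>\<^sub>0 'b::semiring_0"
  assumes "\<And>k. n \<noteq> m + k"
  shows "Poly_Mapping.lookup (Poly_Mapping.single m v * g) n = 0"
  using assms by (simp add: lookup_mult lookup_single when_mult)

section \<open>Coefficients and partial derivatives\<close>

lemma P3_eqI:
  fixes f g :: "'k::zero P3"
  assumes "\<And>a b c. Poly_Mapping.lookup f (a, b, c) = Poly_Mapping.lookup g (a, b, c)"
  shows "f = g"
  using assms by (intro poly_mapping_eqI) auto

lemma zero_triple: "(0 :: nat \<times> nat \<times> nat) = (0, 0, 0)"
  by (simp add: zero_prod_def)

lemma one_P3: "(1 :: 'k::comm_ring_1 P3) = Poly_Mapping.single (0, 0, 0) 1"
  unfolding zero_triple[symmetric] by simp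

lemma numeral_P3: "(numeral n :: 'k::comm_ring_1 P3) = Poly_Mapping.single (0, 0, 0) (numeral n)"
  unfolding zero_triple[symmetric] by simp

lemma single_power:
  "Poly_Mapping.single (a, b, c) v ^ n = Poly_Mapping.single (n * a, n * b, n * c) (v ^ n :: 'k::comm_ring_1)"
  by (induction n) (simp_all add: mult_single one_P3)

lemma P3_sum_single: "f = (\<Sum>k\<in>Poly_Mapping.keys f. Poly_Mapping.single k (Poly_Mapping.lookup f k))"
  by (rule poly_mapping_eqI) (simp add: lookup_sum lookup_single when_def in_keys_iff)

lemma const_if_lead_monom_eq_0:
  fixes f :: "'k::comm_ring_1 P3"
  assumes "lead_monom f = 0"
  shows "f = const (Poly_Mapping.lookup f 0)"
proof -
  have "k = 0" if "k \<in> Poly_Mapping.keys f" for k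
    using le_lead_monom[OF that] assms by (cases k) (auto simp: zero_triple)
  then show ?thesis
    unfolding const_def zero_triple[symmetric]
    by (intro poly_mapping_eqI) (auto simp: lookup_single when_def in_keys_iff)
qed

lemma const_if_power_mult_lead_monom:
  fixes p q :: "'k::idom P3"
  assumes "p ^ n * q \<noteq> 0" "3 \<le> n" "lead_monom (p ^ n * q) = (2, 1, 0)"
  shows "p = const (Poly_Mapping.lookup p 0)"
proof -
  obtain k where "n = Suc (Suc (Suc k))"
    using assms(2) by (auto dest: le_Suc_ex simp: numeral_3_eq_3)
  define r where "r = p ^ k * q"
  have "p ^ n * q = p * (p * (p * r))"
    unfolding r_def \<open>n = Suc (Suc (Suc k))\<close> by (simp add: mult.assoc)
  moreover have "p \<noteq> 0" "r \<noteq> 0"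
    using assms(1) unfolding r_def \<open>n = Suc (Suc (Suc k))\<close> by auto
  ultimately have "lead_monom p + (lead_monom p + (lead_monom p + lead_monom r)) = (2, 1, 0)"
    using assms(3) by (simp add: lead_monom_mult)
  moreover obtain a b c a' b' c' where "lead_monom p = (a, b, c)" "lead_monom r = (a', b', c')"
    by (metis prod.exhaust)
  ultimately have "a + (a + (a + a')) = 2" "b + (b + (b + b')) = 1" "c + (c + (c + c')) = 0"
    by simp_all
  then have "lead_monom p = 0"
    using \<open>lead_monom p = (a, b, c)\<close> by (simp add: zero_triple)
  then show ?thesis
    by (rule const_if_lead_monom_eq_0)
qed

lemma lookup_pd:
  fixes f :: "'k::comm_ring_1 P3"
  shows "Poly_Mapping.lookup (pd1 f) (a, b, c) = of_nat (Suc a) * Poly_Mapping.lookup f (Suc a, b, c)"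
    and "Poly_Mapping.lookup (pd2 f) (a, b, c) = of_nat (Suc b) * Poly_Mapping.lookup f (a, Suc b, c)"
    and "Poly_Mapping.lookup (pd3 f) (a, b, c) = of_nat (Suc c) * Poly_Mapping.lookup f (a, b, Suc c)"
proof -
  have "Poly_Mapping.lookup (case m of (a', b', c') \<Rightarrow>
          Poly_Mapping.single (a' - 1, b', c') (of_nat a' * Poly_Mapping.lookup f m)) (a, b, c)
        = (if m = (Suc a, b, c) then of_nat (Suc a) * Poly_Mapping.lookup f m else 0)"
   and "Poly_Mapping.lookup (case m of (a', b', c') \<Rightarrow>
          Poly_Mapping.single (a', b' - 1, c') (of_nat b' * Poly_Mapping.lookup f m)) (a, b, c)
        = (if m = (a, Suc b, c) then of_nat (Suc b) * Poly_Mapping.lookup f m else 0)"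
   and "Poly_Mapping.lookup (case m of (a', b', c') \<Rightarrow>
          Poly_Mapping.single (a', b', c' - 1) (of_nat c' * Poly_Mapping.lookup f m)) (a, b, c)
        = (if m = (a, b, Suc c) then of_nat (Suc c) * Poly_Mapping.lookup f m else 0)" for m
    by (cases m; auto simp: lookup_single when_def split: nat_diff_split_asm)+
  then show "Poly_Mapping.lookup (pd1 f) (a, b, c) = of_nat (Suc a) * Poly_Mapping.lookup f (Suc a, b, c)"
    and "Poly_Mapping.lookup (pd2 f) (a, b, c) = of_nat (Suc b) * Poly_Mapping.lookup f (a, Suc b, c)"
    and "Poly_Mapping.lookup (pd3 f) (a, b, c) = of_nat (Suc c) * Poly_Mapping.lookup f (a, b, Suc c)"
    by (simp_all add: pd1_def pd2_def pd3_def lookup_sum in_keys_iff)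
qed

lemma pd_add:
  fixes f g :: "'k::comm_ring_1 P3"
  shows "pd1 (f + g) = pd1 f + pd1 g" "pd2 (f + g) = pd2 f + pd2 g" "pd3 (f + g) = pd3 f + pd3 g"
  by (rule P3_eqI, simp add: lookup_add lookup_pd algebra_simps)+

lemma pd_single:
  fixes v :: "'k::comm_ring_1"
  shows "pd1 (Poly_Mapping.single (a, b, c) v) = Poly_Mapping.single (a - 1, b, c) (of_nat a * v)"
    and "pd2 (Poly_Mapping.single (a, b, c) v) = Poly_Mapping.single (a, b - 1, c) (of_nat b * v)"
    and "pd3 (Poly_Mapping.single (a, b, c) v) = Poly_Mapping.single (a, b, c - 1) (of_nat c * v)"
proof -
  show "pd1 (Poly_Mapping.single (a, b, c) v) = Poly_Mapping.single (a - 1, b, c) (of_nat a * v)"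
    by (rule P3_eqI) (cases a; auto simp: lookup_pd lookup_single when_def)
  show "pd2 (Poly_Mapping.single (a, b, c) v) = Poly_Mapping.single (a, b - 1, c) (of_nat b * v)"
    by (rule P3_eqI) (cases b; auto simp: lookup_pd lookup_single when_def)
  show "pd3 (Poly_Mapping.single (a, b, c) v) = Poly_Mapping.single (a, b, c - 1) (of_nat c * v)"
    by (rule P3_eqI) (cases c; auto simp: lookup_pd lookup_single when_def)
qed

lemma pd_X [simp]:
  "pd1 X1 = (1 :: 'k::comm_ring_1 P3)" "pd2 X1 = (0 :: 'k P3)" "pd3 X1 = (0 :: 'k P3)"
  "pd1 X2 = (0 :: 'k P3)" "pd2 X2 = (1 :: 'k P3)" "pd3 X2 = (0 :: 'k P3)"
  "pd1 X3 = (0 :: 'k P3)" "pd2 X3 = (0 :: 'k P3)" "pd3 X3 = (1 :: 'k P3)"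
  by (simp_all add: X1_def X2_def X3_def pd_single one_P3)

lemma pb_eq:
  "pb f g = (pd2 f * pd3 g - pd3 f * pd2 g) * (2 * X1 * X2) + (pd3 f * pd1 g - pd1 f * pd3 g) * X1 ^ 2"
  by (simp add: pb_def)

section \<open>Graded Poisson automorphisms\<close>

definition linear_form :: "'k \<Rightarrow> 'k \<Rightarrow> 'k \<Rightarrow> 'k::comm_ring_1 P3" where
  "linear_form a b c =
     Poly_Mapping.single (1, 0, 0) a + Poly_Mapping.single (0, 1, 0) b + Poly_Mapping.single (0, 0, 1) c"

lemma X_eq_linear_form: "X1 = linear_form 1 0 0" "X2 = linear_form 0 1 0" "X3 = linear_form 0 0 1"
  by (simp_all add: linear_form_def X1_def X2_def X3_def)

lemma homogeneous_1_eq_linear_form: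
  fixes f :: "'k::comm_ring_1 P3"
  assumes "homogeneous 1 f"
  shows "f = linear_form (Poly_Mapping.lookup f (1, 0, 0)) (Poly_Mapping.lookup f (0, 1, 0))
                         (Poly_Mapping.lookup f (0, 0, 1))"
proof (rule P3_eqI)
  fix a b c
  show "Poly_Mapping.lookup f (a, b, c) = Poly_Mapping.lookup (linear_form
      (Poly_Mapping.lookup f (1, 0, 0)) (Poly_Mapping.lookup f (0, 1, 0)) (Poly_Mapping.lookup f (0, 0, 1))) (a, b, c)"
  proof (cases "(a, b, c) \<in> Poly_Mapping.keys f")
    case True
    then have "a + b + c = 1"
      using assms unfolding homogeneous_def by fastforce
    then have "(a, b, c) = (1, 0, 0) \<or> (a, b, c) = (0, 1, 0) \<or> (a, b, c) = (0, 0, 1)"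
      by auto
    then show ?thesis
      by (auto simp: linear_form_def lookup_add lookup_single)
  next
    case False
    then show ?thesis
      by (auto simp: in_keys_iff linear_form_def lookup_add lookup_single when_def)
  qed
qed

lemma linear_form_eq_0_iff: "linear_form a b c = 0 \<longleftrightarrow> a = 0 \<and> b = 0 \<and> c = 0"
proof
  assume "linear_form a b c = 0"
  from arg_cong[OF this, of "\<lambda>f. Poly_Mapping.lookup f (1, 0, 0)"]
    arg_cong[OF this, of "\<lambda>f. Poly_Mapping.lookup f (0, 1, 0)"]
    arg_cong[OF this, of "\<lambda>f. Poly_Mapping.lookup f (0, 0, 1)"]
  show "a = 0 \<and> b = 0 \<and> c = 0"
    by (simp_all add: linear_form_def lookup_add lookup_single)
qed (simp add: linear_form_def)

lemma pd_linear_form: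
  "pd1 (linear_form a b c :: 'k::comm_ring_1 P3) = const a"
  "pd2 (linear_form a b c :: 'k::comm_ring_1 P3) = const b"
  "pd3 (linear_form a b c :: 'k::comm_ring_1 P3) = const c"
  by (simp_all add: linear_form_def pd_add pd_single const_def)

lemma pb_linear_form:
  "pb (linear_form a1 a2 a3) (linear_form b1 b2 b3 :: 'k::comm_ring_1 P3) =
     Poly_Mapping.single (1, 1, 0) (2 * (a2 * b3 - a3 * b2)) + Poly_Mapping.single (2, 0, 0) (a3 * b1 - a1 * b3)"
  unfolding pb_eq pd_linear_form X1_def X2_def const_def numeral_P3 power2_eq_square
  by (simp add: mult_single single_diff[symmetric] single_add[symmetric] algebra_simps numeral_2_eq_2)

lemma lookup_linear_form_mult:
  fixes a1 a2 a3 b1 b2 b3 :: "'k::comm_ring_1"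
  defines "p \<equiv> linear_form a1 a2 a3 * linear_form b1 b2 b3"
  shows "Poly_Mapping.lookup p (2, 0, 0) = a1 * b1"
    and "Poly_Mapping.lookup p (0, 2, 0) = a2 * b2"
    and "Poly_Mapping.lookup p (0, 0, 2) = a3 * b3"
    and "Poly_Mapping.lookup p (1, 0, 1) = a1 * b3 + a3 * b1"
  unfolding p_def by (simp_all add: linear_form_def ring_distribs mult_single lookup_add lookup_single)

lemma pb_X3_X1: "pb X3 X1 = (X1 * X1 :: 'k::comm_ring_1 P3)"
  and pb_X2_X3: "pb X2 X3 = (X1 * X2 + X1 * X2 :: 'k::comm_ring_1 P3)"
  unfolding X_eq_linear_form pb_linear_form
  by (simp_all add: linear_form_def mult_single numeral_2_eq_2 single_add[symmetric])

lemma linear_forms_bracket_relations: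
  fixes a1 a2 a3 b1 b2 b3 c1 c2 c3 :: "'k::field_char_0"
  defines "x \<equiv> linear_form a1 a2 a3" and "y \<equiv> linear_form b1 b2 b3" and "z \<equiv> linear_form c1 c2 c3"
  assumes zx: "pb z x = x * x" and yz: "pb y z = x * y + x * y" and "x \<noteq> 0"
  shows "a1 \<noteq> 0" "a2 = 0" "a3 = 0" "c3 = a1" "b1 = 0" "b3 = 0"
proof -
  have coeff_zx: "Poly_Mapping.lookup (pb z x) k = Poly_Mapping.lookup (x * x) k" for k
    using zx by simp
  have coeff_yz:
    "Poly_Mapping.lookup (pb y z) k = Poly_Mapping.lookup (x * y) k + Poly_Mapping.lookup (x * y) k" for k
    using yz lookup_add by metis
  from coeff_zx[of "(0, 0, 2)"] show "a3 = 0"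
    unfolding x_def z_def lookup_linear_form_mult by (simp add: pb_linear_form lookup_add lookup_single)
  moreover from coeff_zx[of "(0, 2, 0)"] show "a2 = 0"
    unfolding x_def z_def lookup_linear_form_mult by (simp add: pb_linear_form lookup_add lookup_single)
  ultimately show "a1 \<noteq> 0"
    using \<open>x \<noteq> 0\<close> by (simp add: x_def linear_form_eq_0_iff)
  from coeff_zx[of "(2, 0, 0)"] \<open>a3 = 0\<close> have "c3 * a1 = a1 * a1"
    unfolding x_def z_def lookup_linear_form_mult by (simp add: pb_linear_form lookup_add lookup_single)
  with \<open>a1 \<noteq> 0\<close> show "c3 = a1" by simp
  from coeff_yz[of "(1, 0, 1)"] \<open>a3 = 0\<close> \<open>a1 \<noteq> 0\<close> show "b3 = 0"
    unfolding x_def y_def z_def lookup_linear_form_mult by (simp add: pb_linear_form lookup_add lookup_single)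
  from coeff_yz[of "(2, 0, 0)"] \<open>b3 = 0\<close> \<open>c3 = a1\<close> have "- (b1 * a1) = 2 * (a1 * b1)"
    unfolding x_def y_def z_def lookup_linear_form_mult by (simp add: pb_linear_form lookup_add lookup_single)
  with \<open>a1 \<noteq> 0\<close> show "b1 = 0" by simp
qed

lemma alg_hom_zero: "is_alg_hom \<phi> \<Longrightarrow> \<phi> 0 = 0"
  unfolding is_alg_hom_def by (metis add_0 add_left_imp_eq add_0_right)

lemma alg_hom_const: "is_alg_hom \<phi> \<Longrightarrow> \<phi> (const c) = const c"
  unfolding is_alg_hom_def by (metis mult.right_neutral)

lemma alg_hom_power: "is_alg_hom \<phi> \<Longrightarrow> \<phi> (f ^ n) = \<phi> f ^ n"
  by (induction n) (auto simp: is_alg_hom_def)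

lemma alg_hom_sum: "is_alg_hom \<phi> \<Longrightarrow> \<phi> (sum f I) = (\<Sum>i\<in>I. \<phi> (f i))"
  by (induction I rule: infinite_finite_induct) (auto simp: alg_hom_zero, simp add: is_alg_hom_def)

lemma homogeneous_X:
  "homogeneous 1 (X1 :: 'k::comm_ring_1 P3)" "homogeneous 1 (X2 :: 'k P3)" "homogeneous 1 (X3 :: 'k P3)"
  by (simp_all add: homogeneous_def X1_def X2_def X3_def)

lemma X_nonzero: "(X1 :: 'k::comm_ring_1 P3) \<noteq> 0" "(X2 :: 'k P3) \<noteq> 0" "(X3 :: 'k P3) \<noteq> 0"
  by (simp_all add: X_eq_linear_form linear_form_eq_0_iff)

lemma PAut_gr_on_variables:
  fixes \<phi> :: "'k::field_char_0 P3 \<Rightarrow> 'k P3"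
  assumes "\<phi> \<in> PAut_gr"
  obtains l u a b where "l \<noteq> 0" "u \<noteq> 0"
    and "\<phi> X1 = linear_form l 0 0" "\<phi> X2 = linear_form 0 u 0" "\<phi> X3 = linear_form a b l"
proof -
  have hom: "is_alg_hom \<phi>" and "inj \<phi>" and pb_hom: "\<And>f g. \<phi> (pb f g) = pb (\<phi> f) (\<phi> g)"
    and graded: "\<And>f. homogeneous 1 f \<Longrightarrow> homogeneous 1 (\<phi> f)"
    using assms unfolding PAut_gr_def by (auto simp: bij_is_inj)
  then have add: "\<phi> (f + g) = \<phi> f + \<phi> g" and mult: "\<phi> (f * g) = \<phi> f * \<phi> g" for f g
    unfolding is_alg_hom_def by blast+
  have "\<exists>a b c. \<phi> f = linear_form a b c" if "homogeneous 1 f" for f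
    using graded[OF that] homogeneous_1_eq_linear_form by blast
  then obtain a1 a2 a3 b1 b2 b3 c1 c2 c3 where x: "\<phi> X1 = linear_form a1 a2 a3"
      and y: "\<phi> X2 = linear_form b1 b2 b3" and z: "\<phi> X3 = linear_form c1 c2 c3"
    using homogeneous_X by meson
  have x_nonzero: "\<phi> X1 \<noteq> 0"
    using \<open>inj \<phi>\<close> alg_hom_zero[OF hom] X_nonzero(1) by (metis injD)
  have y_nonzero: "\<phi> X2 \<noteq> 0"
    using \<open>inj \<phi>\<close> alg_hom_zero[OF hom] X_nonzero(2) by (metis injD)
  have "pb (\<phi> X3) (\<phi> X1) = \<phi> X1 * \<phi> X1"
    and "pb (\<phi> X2) (\<phi> X3) = \<phi> X1 * \<phi> X2 + \<phi> X1 * \<phi> X2"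
    using pb_hom[of X3 X1] pb_hom[of X2 X3] unfolding pb_X3_X1 pb_X2_X3 add mult by simp_all
  then have "a1 \<noteq> 0" "a2 = 0" "a3 = 0" "c3 = a1" "b1 = 0" "b3 = 0"
    using linear_forms_bracket_relations[of c1 c2 c3 a1 a2 a3 b1 b2 b3] x_nonzero unfolding x y z by blast+
  moreover have "b2 \<noteq> 0"
    using y_nonzero \<open>b1 = 0\<close> \<open>b3 = 0\<close> unfolding y by (simp add: linear_form_eq_0_iff)
  ultimately show ?thesis
    using that[of a1 b2 c1 c2] x y z by simp
qed

definition x2_weight :: "('k::comm_ring_1 P3 \<Rightarrow> 'k P3) \<Rightarrow> 'k" where
  "x2_weight \<phi> = Poly_Mapping.lookup (\<phi> X2) (0, 1, 0)"

lemma PAut_gr_X2: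
  fixes \<phi> :: "'k::field_char_0 P3 \<Rightarrow> 'k P3"
  assumes "\<phi> \<in> PAut_gr"
  shows "\<phi> X2 = const (x2_weight \<phi>) * X2" "x2_weight \<phi> \<noteq> 0"
proof -
  obtain u where "u \<noteq> 0" "\<phi> X2 = linear_form 0 u 0"
    using PAut_gr_on_variables[OF assms] by metis
  then show "\<phi> X2 = const (x2_weight \<phi>) * X2" "x2_weight \<phi> \<noteq> 0"
    by (simp_all add: x2_weight_def linear_form_def lookup_add const_def X2_def mult_single)
qed

lemma x2_weight_comp:
  fixes g h :: "'k::field_char_0 P3 \<Rightarrow> 'k P3"
  assumes "g \<in> PAut_gr" "h \<in> PAut_gr"
  shows "x2_weight (g \<circ> h) = x2_weight g * x2_weight h"
proof -
  have "(g \<circ> h) X2 = g (const (x2_weight h) * X2)"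
    using PAut_gr_X2(1)[OF assms(2)] by simp
  also have "\<dots> = const (x2_weight h) * g X2"
    using assms(1) unfolding PAut_gr_def is_alg_hom_def by blast
  also have "\<dots> = const (x2_weight g * x2_weight h) * X2"
    unfolding PAut_gr_X2(1)[OF assms(1)] by (simp add: const_def mult_single mult.assoc mult.commute)
  finally show ?thesis
    by (simp add: x2_weight_def const_def X2_def mult_single)
qed

lemma lin_part_triangular:
  fixes \<phi> :: "'k::comm_ring_1 P3 \<Rightarrow> 'k P3"
  assumes "\<phi> X1 = linear_form l 0 0" "\<phi> X2 = linear_form 0 u 0" "\<phi> X3 = linear_form a b l"
  shows "char_poly (lin_part \<phi>) = [:-l, 1:] * ([:-u, 1:] * [:-l, 1:])"
proof -
  define M where "M = lin_part \<phi>"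
  have M: "M \<in> carrier_mat 3 3"
    unfolding M_def lin_part_def by simp
  have entries: "M $$ (i, j) = Poly_Mapping.lookup (\<phi> (Poly_Mapping.single (var j) 1)) (var i)"
    if "i < 3" "j < 3" for i j
    using that unfolding M_def lin_part_def by simp
  have less_3: "i < dim_row M \<longleftrightarrow> i = 0 \<or> i = 1 \<or> i = 2" for i
    using M by auto
  have columns: "\<phi> (Poly_Mapping.single (var 0) 1) = linear_form l 0 0"
    "\<phi> (Poly_Mapping.single (var 1) 1) = linear_form 0 u 0"
    "\<phi> (Poly_Mapping.single (var 2) 1) = linear_form a b l"
    using assms by (simp_all add: var_def X1_def X2_def X3_def)
  have rows: "Poly_Mapping.lookup (linear_form x y z) (var 0) = x"
    "Poly_Mapping.lookup (linear_form x y z) (var 1) = y"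
    "Poly_Mapping.lookup (linear_form x y z) (var 2) = z" for x y z :: 'k
    by (simp_all add: var_def linear_form_def lookup_add lookup_single)
  have "M $$ (1, 0) = 0" "M $$ (2, 0) = 0" "M $$ (2, 1) = 0"
    by (simp_all add: entries columns rows)
  then have "upper_triangular M"
    using M unfolding upper_triangular_def less_3 by (auto simp: less_2_cases_iff One_nat_def)
  moreover have "[0..<3] = [0, 1, 2::nat]"
    by (simp add: upt_rec One_nat_def)
  then have "diag_mat M = [l, u, l]"
    using M by (simp add: diag_mat_def entries columns rows)
  ultimately show ?thesis
    using char_poly_upper_triangular[OF M] unfolding M_def by simp
qed

lemma cubic_factorization_roots:
  fixes l u \<xi> :: "'k::idom"
  assumes eq: "[:-l, 1:] * ([:-u, 1:] * [:-l, 1:]) = [:-1, 1:] ^ 2 * [:-\<xi>, 1:]"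
    and "\<xi> \<noteq> 1" "l \<noteq> 0"
  shows "l = 1" "u = \<xi>"
proof -
  have at: "(x - l) * ((x - u) * (x - l)) = (x - 1) ^ 2 * (x - \<xi>)" for x
    using arg_cong[OF eq, of "\<lambda>p. poly p x"] by (simp add: algebra_simps)
  from at[of 0] have prod: "l * (u * l) = \<xi>"
    by simp
  show "l = 1"
  proof (rule ccontr)
    assume "l \<noteq> 1"
    with at[of l] at[of 1] have "l = \<xi>" "u = 1"
      by simp_all
    with prod \<open>l \<noteq> 0\<close> \<open>l \<noteq> 1\<close> show False
      by simp
  qed
  with prod show "u = \<xi>"
    by simp
qed

lemma poisson_reflection_on_variables:
  fixes \<phi> :: "'k::field_char_0 P3 \<Rightarrow> 'k P3"
  assumes "poisson_reflection \<phi>"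
  shows "\<phi> X1 = X1" "x2_weight \<phi> \<noteq> 1"
proof -
  obtain \<xi> where "\<xi> \<noteq> 1" and char: "char_poly (lin_part \<phi>) = [:-1, 1:] ^ 2 * [:-\<xi>, 1:]"
    using assms unfolding poisson_reflection_def by blast
  obtain l u a b where "l \<noteq> 0" and on_vars: "\<phi> X1 = linear_form l 0 0" "\<phi> X2 = linear_form 0 u 0"
      "\<phi> X3 = linear_form a b l"
    using assms unfolding poisson_reflection_def by (auto elim: PAut_gr_on_variables)
  have "l = 1" "u = \<xi>"
    using cubic_factorization_roots[OF _ \<open>\<xi> \<noteq> 1\<close> \<open>l \<noteq> 0\<close>] lin_part_triangular[OF on_vars] char
    by simp_all
  with on_vars \<open>\<xi> \<noteq> 1\<close> show "\<phi> X1 = X1" "x2_weight \<phi> \<noteq> 1"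
    by (simp_all add: X_eq_linear_form x2_weight_def linear_form_def lookup_add)
qed

lemma single_eq_const_mult_monomial:
  "Poly_Mapping.single (a, b, 0) v = const v * (X1 ^ a * X2 ^ b :: 'k::comm_ring_1 P3)"
  by (simp add: const_def X1_def X2_def single_power mult_single)

lemma diagonal_action_single:
  fixes g :: "'k::comm_ring_1 P3 \<Rightarrow> 'k P3"
  assumes "is_alg_hom g" "g X1 = X1" "g X2 = const u * X2"
  shows "g (Poly_Mapping.single (a, b, 0) v) = Poly_Mapping.single (a, b, 0) (v * u ^ b)"
proof -
  have "g (Poly_Mapping.single (a, b, 0) v) = const v * (X1 ^ a * (const u * X2) ^ b)"
    using assms alg_hom_power[OF assms(1)] alg_hom_const[OF assms(1)]
    unfolding single_eq_const_mult_monomial by (simp add: is_alg_hom_def)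
  also have "\<dots> = const (v * u ^ b) * (X1 ^ a * X2 ^ b)"
    by (simp add: power_mult_distrib const_def single_power mult_single ac_simps)
  finally show ?thesis
    by (simp add: single_eq_const_mult_monomial)
qed

lemma lookup_diagonal_action:
  fixes g :: "'k::comm_ring_1 P3 \<Rightarrow> 'k P3"
  assumes "is_alg_hom g" "g X1 = X1" "g X2 = const u * X2"
    and no_x3: "\<And>k. k \<in> Poly_Mapping.keys f \<Longrightarrow> snd (snd k) = 0"
  shows "Poly_Mapping.lookup (g f) (a, b, 0) = Poly_Mapping.lookup f (a, b, 0) * u ^ b"
proof -
  have "g f = (\<Sum>k\<in>Poly_Mapping.keys f. g (Poly_Mapping.single k (Poly_Mapping.lookup f k)))"
    by (subst P3_sum_single) (rule alg_hom_sum[OF assms(1)])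
  also have "\<dots> = (\<Sum>k\<in>Poly_Mapping.keys f.
      Poly_Mapping.single k (Poly_Mapping.lookup f k * u ^ fst (snd k)))"
  proof (rule sum.cong)
    fix k assume "k \<in> Poly_Mapping.keys f"
    then obtain x y where "k = (x, y, 0)"
      using no_x3 by (cases k) auto
    then show "g (Poly_Mapping.single k (Poly_Mapping.lookup f k)) =
        Poly_Mapping.single k (Poly_Mapping.lookup f k * u ^ fst (snd k))"
      by (simp add: diagonal_action_single[OF assms(1-3)])
  qed simp
  finally show ?thesis
    by (auto simp: lookup_sum lookup_single when_def in_keys_iff)
qed

section \<open>Exponents and generated groups\<close>

lemma power_eq_one_if_mult_closed:
  fixes M :: "'a::idom set"
  assumes "finite M" "0 \<notin> M" "\<And>u v. u \<in> M \<Longrightarrow> v \<in> M \<Longrightarrow> u * v \<in> M" "u \<in> M"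
  shows "\<exists>n>0. u ^ n = 1"
proof -
  have powers: "u ^ Suc i \<in> M" for i
    by (induction i) (use assms(3,4) in auto)
  have "\<not> inj_on (\<lambda>i. u ^ Suc i) {..card M}"
  proof
    assume "inj_on (\<lambda>i. u ^ Suc i) {..card M}"
    then have "card {..card M} \<le> card M"
      using powers assms(1) by (intro card_inj_on_le) auto
    then show False
      by simp
  qed
  then obtain i j where "i < j" "u ^ Suc i = u ^ Suc j"
    unfolding inj_on_def by (metis linorder_neq_iff)
  moreover have "u ^ Suc j = u ^ Suc i * u ^ (j - i)"
    unfolding power_add[symmetric] using \<open>i < j\<close> by simp
  moreover have "u ^ Suc i \<noteq> 0"
    using powers assms(2) by metis
  ultimately have "u ^ (j - i) = 1"
    by (metis mult.right_neutral mult_left_cancel)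
  then show ?thesis
    using \<open>i < j\<close> by (intro exI[of _ "j - i"]) simp
qed

lemma exponent_exists:
  fixes M :: "'a::monoid_mult set"
  assumes "finite M" "\<And>u. u \<in> M \<Longrightarrow> \<exists>n>0. u ^ n = 1"
  obtains e where "e > 0" "\<And>u. u \<in> M \<Longrightarrow> u ^ e = 1"
    and "\<And>j. (\<And>u. u \<in> M \<Longrightarrow> u ^ j = 1) \<Longrightarrow> e dvd j"
proof -
  define kills where "kills n \<longleftrightarrow> 0 < n \<and> (\<forall>u\<in>M. u ^ n = 1)" for n
  obtain n where n: "\<And>u. u \<in> M \<Longrightarrow> n u > 0 \<and> u ^ n u = 1"
    using assms(2) by metis
  have "kills (prod n M)"
  proof -
    have "u ^ prod n M = 1" if u: "u \<in> M" for u
    proof -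
      obtain k where "prod n M = n u * k"
        using dvd_prodI[OF assms(1) u] by blast
      then show ?thesis
        using n[OF u] by (simp add: power_mult)
    qed
    then show ?thesis
      using n assms(1) by (auto simp: kills_def intro: prod_pos)
  qed
  define e where "e = (LEAST n. kills n)"
  have "kills e"
    unfolding e_def by (rule LeastI) fact
  then have "e > 0" and e_kills: "\<And>u. u \<in> M \<Longrightarrow> u ^ e = 1"
    by (auto simp: kills_def)
  moreover have "e dvd j" if "\<And>u. u \<in> M \<Longrightarrow> u ^ j = 1" for j
  proof (rule ccontr)
    assume "\<not> e dvd j"
    then have "j mod e > 0"
      by (simp add: dvd_eq_mod_eq_0)
    moreover have "u ^ (j mod e) = 1" if "u \<in> M" for u
    proof -
      have "u ^ j = (u ^ e) ^ (j div e) * u ^ (j mod e)"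
        by (simp flip: power_mult power_add)
      then show ?thesis
        using that e_kills \<open>\<And>u. u \<in> M \<Longrightarrow> u ^ j = 1\<close> by simp
    qed
    ultimately have "e \<le> j mod e"
      unfolding e_def by (intro Least_le) (simp add: kills_def)
    then show False
      using \<open>e > 0\<close> by (meson mod_less_divisor not_le)
  qed
  ultimately show ?thesis
    using that by blast
qed

lemma gen_group_empty: "gen_group {} = {id}"
proof -
  have "a = id" if "a \<in> gen_group {}" for a :: "'a \<Rightarrow> 'a"
    using that by induction auto
  then show ?thesis
    using gen_group.gen_id by blast
qed

lemma gen_group_fixes:
  assumes "\<And>s. s \<in> S \<Longrightarrow> bij s \<and> s x = x" and "a \<in> gen_group S"
  shows "bij a \<and> a x = x"
  using assms(2)
proof induction
  case gen_id
  show ?case by (metis bij_id id_apply)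
next
  case (gen_base s)
  then show ?case by (rule assms(1))
next
  case (gen_comp a b)
  then show ?case by (metis bij_comp comp_apply)
next
  case (gen_inv a)
  then show ?case by (simp add: bij_imp_bij_inv bij_is_inj inv_into_f_eq)
qed

section \<open>The Poisson centre\<close>

definition casimir :: "'k::comm_ring_1 P3" where
  "casimir = X1 ^ 2 * X2"

lemma casimir_power: "casimir ^ m = (Poly_Mapping.single (2 * m, m, 0) 1 :: 'k::comm_ring_1 P3)"
  by (simp add: casimir_def X1_def X2_def single_power mult_single power_mult_distrib mult.commute[of 2])

lemma casimir_power_eq: "casimir ^ m = X1 ^ (2 * m) * (X2 ^ m :: 'k::comm_ring_1 P3)"
  by (simp add: casimir_def power_mult_distrib power_mult)

lemma pb_casimir_power: "pb (casimir ^ m) h = (0 :: 'k::comm_ring_1 P3)"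
proof (cases m)
  case 0
  then show ?thesis
    by (simp add: pb_def one_P3 pd_single)
next
  case (Suc n)
  then show ?thesis
    unfolding casimir_power by (simp add: pb_eq pd_single X1_def X2_def numeral_P3 mult_single single_power
        algebra_simps numeral_2_eq_2 One_nat_def)
qed

interpretation const_hom: comm_ring_hom "const :: 'k::comm_ring_1 \<Rightarrow> 'k P3"
  by unfold_locales (simp_all add: const_def single_add mult_single one_P3)

definition poly_casimir :: "nat \<Rightarrow> 'k::comm_ring_1 poly \<Rightarrow> 'k P3" where
  "poly_casimir m p = poly (map_poly const p) (casimir ^ m)"

lemma poly_casimir_monom: "poly_casimir m (monom c i) = Poly_Mapping.single (2 * (m * i), m * i, 0) c"
  by (simp add: poly_casimir_def map_poly_monom poly_monom casimir_power single_power const_def mult_single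
      power_mult[symmetric] ac_simps)

lemma poly_casimir_sum: "poly_casimir m (sum f I) = (\<Sum>i\<in>I. poly_casimir m (f i))"
  by (induction I rule: infinite_finite_induct) (simp_all add: poly_casimir_def const_hom.map_poly_hom_add)

lemma poly_casimir_eq_sum:
  "poly_casimir m p = (\<Sum>i\<le>degree p. Poly_Mapping.single (2 * (m * i), m * i, 0) (coeff p i))"
  by (subst poly_as_sum_of_monoms[symmetric]) (simp only: poly_casimir_sum poly_casimir_monom)

lemma poly_casimir_x: "poly_casimir 1 [:0, 1:] = (casimir :: 'k::comm_ring_1 P3)"
proof -
  have "[:0, 1:] = (monom 1 1 :: 'k poly)"
    by (simp add: monom_Suc One_nat_def one_pCons)
  then show ?thesis
    using poly_casimir_monom[of 1 "1 :: 'k" 1] casimir_power[where 'k = 'k and m = 1] by simp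
qed

lemma lookup_poly_casimir:
  assumes "0 < m"
  shows "Poly_Mapping.lookup (poly_casimir m p) (2 * (m * j), m * j, 0) = coeff p j"
  using assms by (auto simp: poly_casimir_eq_sum lookup_sum lookup_single when_def coeff_eq_0)

lemma keys_poly_casimir:
  assumes "k \<in> Poly_Mapping.keys (poly_casimir m p)"
  obtains j where "j \<le> degree p" "k = (2 * (m * j), m * j, 0)" "coeff p j \<noteq> 0"
proof -
  have "Poly_Mapping.lookup (poly_casimir m p) k \<noteq> 0"
    using assms by (simp add: in_keys_iff)
  then obtain j where "j \<le> degree p" "k = (2 * (m * j), m * j, 0)" "coeff p j \<noteq> 0"
    unfolding poly_casimir_eq_sum lookup_sum
    by (auto simp: lookup_single when_def elim: sum.not_neutral_contains_not_neutral split: if_splits)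
  then show ?thesis
    using that by blast
qed

lemma poly_casimir_inj:
  assumes "0 < m" "poly_casimir m p = poly_casimir m q"
  shows "p = q"
  using lookup_poly_casimir[OF assms(1)] assms(2) by (metis poly_eqI)

lemma poly_casimir_if_keys:
  fixes f :: "'k::comm_ring_1 P3"
  assumes "0 < m" "\<And>k. k \<in> Poly_Mapping.keys f \<Longrightarrow> \<exists>j. k = (2 * (m * j), m * j, 0)"
  shows "\<exists>p. f = poly_casimir m p"
proof
  define p where "p = (\<Sum>k\<in>Poly_Mapping.keys f. monom (Poly_Mapping.lookup f k) (fst (snd k) div m))"
  have "poly_casimir m p = (\<Sum>k\<in>Poly_Mapping.keys f. Poly_Mapping.single k (Poly_Mapping.lookup f k))"
    unfolding p_def poly_casimir_sum poly_casimir_monom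
  proof (rule sum.cong)
    fix k assume "k \<in> Poly_Mapping.keys f"
    then obtain j where "k = (2 * (m * j), m * j, 0)"
      using assms(2) by blast
    then show "Poly_Mapping.single (2 * (m * (fst (snd k) div m)), m * (fst (snd k) div m), 0)
        (Poly_Mapping.lookup f k) = Poly_Mapping.single k (Poly_Mapping.lookup f k)"
      using assms(1) by simp
  qed simp
  then show "f = poly_casimir m p"
    using P3_sum_single by metis
qed

lemma poly_casimir_pcompose: "poly_casimir m (pcompose p q) = poly (map_poly const p) (poly_casimir m q)"
  by (simp add: poly_casimir_def const_hom.map_poly_pcompose poly_pcompose)

lemma lead_monom_poly_casimir:
  assumes "0 < m" "p \<noteq> 0"
  shows "lead_monom (poly_casimir m p) = (2 * (m * degree p), m * degree p, 0)"
  unfolding lead_monom_def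
proof (rule Max_eqI)
  show "(2 * (m * degree p), m * degree p, 0) \<in> Poly_Mapping.keys (poly_casimir m p)"
    using assms by (simp add: in_keys_iff lookup_poly_casimir)
  fix k assume "k \<in> Poly_Mapping.keys (poly_casimir m p)"
  then obtain j where "j \<le> degree p" "k = (2 * (m * j), m * j, 0)"
    by (rule keys_poly_casimir)
  then show "k \<le> (2 * (m * degree p), m * degree p, 0)"
    by (auto simp: le_less)
qed simp

lemma lookup_weighted_euler:
  fixes f :: "'k::comm_ring_1 P3"
  shows "Poly_Mapping.lookup (pd2 f * (2 * X1 * X2) - pd1 f * X1 ^ 2) (Suc a, b, c)
           = (2 * of_nat b - of_nat a) * Poly_Mapping.lookup f (a, b, c)"
proof -
  have "pd2 f * (2 * X1 * X2) = Poly_Mapping.single (1, 1, 0) 2 * pd2 f"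
    by (simp add: X1_def X2_def numeral_P3 mult_single mult.commute)
  moreover have "pd1 f * X1 ^ 2 = Poly_Mapping.single (2, 0, 0) 1 * pd1 f"
    by (simp add: X1_def single_power mult.commute)
  moreover have "Poly_Mapping.lookup (Poly_Mapping.single (1, 1, 0) 2 * pd2 f) (Suc a, b, c)
      = 2 * of_nat b * Poly_Mapping.lookup f (a, b, c)"
  proof (cases b)
    case 0
    then show ?thesis
      by (simp add: lookup_single_mult_eq_0 plus_prod_def split: prod.splits)
  next
    case (Suc b')
    then have "(Suc a, b, c) = (1, 1, 0) + (a, b', c)"
      by simp
    then show ?thesis
      using Suc by (simp only: lookup_single_mult_add) (simp add: lookup_pd algebra_simps)
  qed
  moreover have "Poly_Mapping.lookup (Poly_Mapping.single (2, 0, 0) 1 * pd1 f) (Suc a, b, c)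
      = of_nat a * Poly_Mapping.lookup f (a, b, c)"
  proof (cases a)
    case 0
    then show ?thesis
      by (simp add: lookup_single_mult_eq_0 plus_prod_def split: prod.splits)
  next
    case (Suc a')
    then have "(Suc a, b, c) = (2, 0, 0) + (a', b, c)"
      by simp
    then show ?thesis
      using Suc by (simp only: lookup_single_mult_add) (simp add: lookup_pd)
  qed
  ultimately show ?thesis
    by (simp only: lookup_minus) (simp add: algebra_simps)
qed

lemma poly_casimir_if_commutes:
  fixes f h :: "'k::field_char_0 P3"
  assumes "pb f X1 = 0" "pb f h = 0" "pd3 h \<noteq> 0"
  shows "\<exists>p. f = poly_casimir 1 p"
proof (rule poly_casimir_if_keys)
  have "pd3 f * X1 ^ 2 = 0"
    using assms(1) by (simp add: pb_eq)
  then have no_x3: "pd3 f = 0"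
    by (simp add: X_nonzero)
  then have "pd3 h * (pd2 f * (2 * X1 * X2) - pd1 f * X1 ^ 2) = 0"
    using assms(2) by (simp add: pb_eq algebra_simps)
  then have euler: "pd2 f * (2 * X1 * X2) - pd1 f * X1 ^ 2 = 0"
    using assms(3) by simp
  fix k assume "k \<in> Poly_Mapping.keys f"
  then obtain a b c where k: "k = (a, b, c)" and nonzero: "Poly_Mapping.lookup f (a, b, c) \<noteq> 0"
    by (cases k) (auto simp: in_keys_iff)
  have "c = 0"
  proof (rule ccontr)
    assume "c \<noteq> 0"
    then have "Poly_Mapping.lookup (pd3 f) (a, b, c - 1) \<noteq> 0"
      using nonzero by (simp add: lookup_pd)
    with no_x3 show False
      by simp
  qed
  moreover have "(2 * of_nat b - of_nat a) * Poly_Mapping.lookup f (a, b, c) = (0 :: 'k)"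
    using lookup_weighted_euler[of f a b c] euler by simp
  then have "of_nat (2 * b) = (of_nat a :: 'k)"
    using nonzero by simp
  then have "a = 2 * b"
    by (simp only: of_nat_eq_iff)
  ultimately show "\<exists>j. k = (2 * (1 * j), 1 * j, 0)"
    using k by simp
qed simp

section \<open>Poisson isomorphisms onto P\<close>

locale poisson_iso_from_subalgebra =
  fixes A :: "'k::field_char_0 P3 set" and \<psi> :: "'k P3 \<Rightarrow> 'k P3"
  assumes add_mem: "f \<in> A \<Longrightarrow> h \<in> A \<Longrightarrow> f + h \<in> A"
    and mult_mem: "f \<in> A \<Longrightarrow> h \<in> A \<Longrightarrow> f * h \<in> A"
    and pb_mem: "f \<in> A \<Longrightarrow> h \<in> A \<Longrightarrow> pb f h \<in> A"
    and const_mem: "const c \<in> A"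
    and bij: "bij_betw \<psi> A UNIV"
    and add: "f \<in> A \<Longrightarrow> h \<in> A \<Longrightarrow> \<psi> (f + h) = \<psi> f + \<psi> h"
    and mult: "f \<in> A \<Longrightarrow> h \<in> A \<Longrightarrow> \<psi> (f * h) = \<psi> f * \<psi> h"
    and pb: "f \<in> A \<Longrightarrow> h \<in> A \<Longrightarrow> \<psi> (pb f h) = pb (\<psi> f) (\<psi> h)"
    and const_mult: "f \<in> A \<Longrightarrow> \<psi> (const c * f) = const c * \<psi> f"
    and one: "\<psi> 1 = 1"
begin

lemma zero_mem: "0 \<in> A" and one_mem: "1 \<in> A"
  using const_mem[of 0] const_mem[of 1] by (simp_all add: const_def one_P3)

lemma zero: "\<psi> 0 = 0"
  using add[OF zero_mem zero_mem] by simp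

lemma const: "\<psi> (const c) = const c"
  using const_mult[OF one_mem] one by simp

lemma power_mem: "f \<in> A \<Longrightarrow> f ^ n \<in> A"
  by (induction n) (simp_all add: one_mem mult_mem)

lemma power: "f \<in> A \<Longrightarrow> \<psi> (f ^ n) = \<psi> f ^ n"
  by (induction n) (simp_all add: one mult power_mem)

lemma poly_map_const:
  assumes "a \<in> A"
  shows "poly (map_poly const p) a \<in> A \<and> \<psi> (poly (map_poly const p) a) = poly (map_poly const p) (\<psi> a)"
proof (induction p)
  case 0
  show ?case
    by (simp add: zero_mem zero)
next
  case (pCons c p)
  then show ?case
    using assms by (simp add: const_hom.map_poly_pCons_hom add_mem mult_mem const_mem add mult const)
qed

lemma inj: "inj_on \<psi> A"
  using bij by (rule bij_betw_imp_inj_on)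

lemma surj: obtains f where "f \<in> A" "\<psi> f = g"
  using bij by (metis UNIV_I bij_betw_iff_bijections)

lemma central_iff:
  assumes "f \<in> A"
  shows "(\<forall>h\<in>A. pb f h = 0) \<longleftrightarrow> (\<forall>h. pb (\<psi> f) h = 0)"
proof
  assume central: "\<forall>h\<in>A. pb f h = 0"
  show "\<forall>h. pb (\<psi> f) h = 0"
  proof
    fix h
    obtain h' where "h' \<in> A" "\<psi> h' = h"
      by (rule surj)
    then show "pb (\<psi> f) h = 0"
      using pb[OF assms] central zero by metis
  qed
next
  assume "\<forall>h. pb (\<psi> f) h = 0"
  then have "\<psi> (pb f h) = \<psi> 0" if "h \<in> A" for h
    using pb[OF assms that] zero by simp
  then show "\<forall>h\<in>A. pb f h = 0"
    using inj pb_mem[OF assms] zero_mem by (meson inj_onD)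
qed

lemma exists_x3_dependent: "\<exists>h\<in>A. pd3 h \<noteq> 0"
proof (rule ccontr)
  assume "\<not> (\<exists>h\<in>A. pd3 h \<noteq> 0)"
  then have "pb f h = 0" if "f \<in> A" "h \<in> A" for f h
    using that by (simp add: pb_eq)
  moreover obtain f h where "f \<in> A" "\<psi> f = X2" "h \<in> A" "\<psi> h = X3"
    using surj by metis
  ultimately have "pb X2 X3 = (0 :: 'k P3)"
    using pb zero by metis
  moreover have "Poly_Mapping.lookup (pb X2 X3 :: 'k P3) (1, 1, 0) = 2"
    unfolding pb_X2_X3 lookup_add by (simp add: X1_def X2_def mult_single)
  ultimately show False
    by simp
qed

lemma central_eq_poly_casimir:
  assumes "X1 \<in> A" "f \<in> A" "\<forall>h\<in>A. pb f h = 0"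
  shows "\<exists>p. f = poly_casimir 1 p"
  using exists_x3_dependent assms poly_casimir_if_commutes by blast

lemma casimir_power_image_linear:
  assumes "X1 \<in> A" "X2 ^ m \<in> A"
    and invariant_casimir: "\<And>p. poly_casimir 1 p \<in> A \<Longrightarrow> \<exists>q. poly_casimir 1 p = poly_casimir m q"
  obtains r where "degree r = 1" "\<psi> (casimir ^ m) = poly_casimir 1 r"
proof -
  have casimir_central: "pb (casimir ^ n) h = 0" for n and h :: "'k P3"
    by (rule pb_casimir_power)
  have casimir_power_mem: "casimir ^ m \<in> A"
    using assms(1,2) by (simp add: casimir_power_eq power_mem mult_mem)
  obtain e where "e \<in> A" and "\<psi> e = casimir"
    by (rule surj)
  then have "\<forall>h\<in>A. pb e h = 0"
    using central_iff casimir_central[of 1] by simp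
  then obtain H where e: "e = poly_casimir m H"
    using central_eq_poly_casimir assms(1) \<open>e \<in> A\<close> invariant_casimir by metis
  have "\<forall>h. pb (\<psi> (casimir ^ m)) h = 0"
    using central_iff[OF casimir_power_mem] casimir_central by simp
  then obtain r where r: "\<psi> (casimir ^ m) = poly_casimir 1 r"
    using poly_casimir_if_commutes[of _ X3] by fastforce
  have "poly_casimir 1 [:0, 1:] = \<psi> e"
    by (simp add: poly_casimir_x \<open>\<psi> e = casimir\<close>)
  also have "\<dots> = poly (map_poly const H) (\<psi> (casimir ^ m))"
    using poly_map_const[OF casimir_power_mem] unfolding e poly_casimir_def by simp
  also have "\<dots> = poly_casimir 1 (pcompose H r)"
    by (simp add: r poly_casimir_pcompose)
  finally have "pcompose H r = [:0, 1:]"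
    using poly_casimir_inj[of 1 "pcompose H r" "[:0, 1:]"] by simp
  then have "degree H * degree r = 1"
    using degree_pcompose[of H r] by simp
  then show thesis
    using that[OF _ r] by simp
qed

lemma no_casimir_root:
  assumes "X1 \<in> A" "X2 ^ m \<in> A" "2 \<le> m"
    and "\<And>p. poly_casimir 1 p \<in> A \<Longrightarrow> \<exists>q. poly_casimir 1 p = poly_casimir m q"
  shows False
proof -
  obtain r where "degree r = 1" and r: "\<psi> (casimir ^ m) = poly_casimir 1 r"
    using casimir_power_image_linear assms(1,2,4) by blast
  have "r \<noteq> 0"
    using \<open>degree r = 1\<close> by auto
  then have "coeff r 1 \<noteq> 0"
    using leading_coeff_neq_0[of r] \<open>degree r = 1\<close> by simp
  then have "poly_casimir 1 r \<noteq> 0"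
    using lookup_poly_casimir[of 1 r 1] by auto
  moreover have "lead_monom (poly_casimir 1 r) = (2, 1, 0)"
    using lead_monom_poly_casimir[of 1 r] \<open>r \<noteq> 0\<close> \<open>degree r = 1\<close> by simp
  moreover have "\<psi> (casimir ^ m) = \<psi> X1 ^ (2 * m) * \<psi> (X2 ^ m)"
    using assms(1,2) by (simp add: casimir_power_eq mult power power_mem)
  ultimately have "\<psi> X1 ^ (2 * m) * \<psi> (X2 ^ m) \<noteq> 0"
    and "lead_monom (\<psi> X1 ^ (2 * m) * \<psi> (X2 ^ m)) = (2, 1, 0)"
    using r by simp_all
  then have "\<psi> X1 = const (Poly_Mapping.lookup (\<psi> X1) 0)"
    using assms(3) by (intro const_if_power_mult_lead_monom) simp_all
  then have "X1 = const (Poly_Mapping.lookup (\<psi> X1) 0)"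
    using inj assms(1) const_mem const by (metis inj_onD)
  then have "Poly_Mapping.lookup X1 (1, 0, 0) =
      Poly_Mapping.lookup (const (Poly_Mapping.lookup (\<psi> X1) 0)) (1, 0, 0)"
    by simp
  then show False
    by (simp add: X1_def const_def lookup_single)
qed

end

section \<open>Invariants of groups generated by reflections\<close>

lemma poisson_iso_from_invariants:
  fixes G :: "('k::field_char_0 P3 \<Rightarrow> 'k P3) set"
  assumes "G \<subseteq> PAut_gr" "poisson_iso_to_P (invariants G)"
  obtains \<psi> where "poisson_iso_from_subalgebra (invariants G) \<psi>"
proof -
  have hom: "is_alg_hom g" and pb_hom: "g (pb f h) = pb (g f) (g h)" if "g \<in> G" for g f h
    using assms(1) that unfolding PAut_gr_def by auto
  then have add: "g (f + h) = g f + g h" and mult: "g (f * h) = g f * g h"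
    and const: "g (const c) = const c" if "g \<in> G" for g f h c
    using that alg_hom_const unfolding is_alg_hom_def by blast+
  have closed: "f + h \<in> invariants G" "f * h \<in> invariants G" "pb f h \<in> invariants G"
    if "f \<in> invariants G" "h \<in> invariants G" for f h
    using that unfolding invariants_def by (auto simp: add mult pb_hom) metis
  have "const c \<in> invariants G" for c
    by (simp add: invariants_def const)
  moreover obtain \<psi> where "bij_betw \<psi> (invariants G) UNIV"
    and "\<forall>f\<in>invariants G. \<forall>h\<in>invariants G.
           \<psi> (f + h) = \<psi> f + \<psi> h \<and> \<psi> (f * h) = \<psi> f * \<psi> h \<and> \<psi> (pb f h) = pb (\<psi> f) (\<psi> h)"
    and "\<forall>c. \<forall>f\<in>invariants G. \<psi> (const c * f) = const c * \<psi> f" and "\<psi> 1 = 1"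
    using assms(2) unfolding poisson_iso_to_P_def by blast
  ultimately have "poisson_iso_from_subalgebra (invariants G) \<psi>"
    using closed by unfold_locales blast+
  then show thesis
    by (rule that)
qed

lemma reflection_group_fixes_X1:
  fixes G :: "('k::field_char_0 P3 \<Rightarrow> 'k P3) set"
  assumes "G \<subseteq> PAut_gr" "G = gen_group {g \<in> G. poisson_reflection g}" "g \<in> G"
  shows "g X1 = X1"
proof -
  have "bij s \<and> s X1 = X1" if "s \<in> {g \<in> G. poisson_reflection g}" for s
  proof
    show "bij s"
      using that assms(1) unfolding PAut_gr_def by auto
    show "s X1 = X1"
      using that poisson_reflection_on_variables(1) by blast
  qed
  moreover have "g \<in> gen_group {g \<in> G. poisson_reflection g}"
    using assms(2,3) by simp
  ultimately show ?thesis
    by (rule gen_group_fixes[THEN conjunct2])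
qed

lemma x2_weight_exponent:
  fixes G :: "('k::field_char_0 P3 \<Rightarrow> 'k P3) set"
  assumes "finite_subgroup_PAut G"
  obtains m where "0 < m" "\<And>g. g \<in> G \<Longrightarrow> x2_weight g ^ m = 1"
    and "\<And>j. (\<And>g. g \<in> G \<Longrightarrow> x2_weight g ^ j = 1) \<Longrightarrow> m dvd j"
proof -
  have "finite G" "G \<subseteq> PAut_gr" and comp: "\<And>g h. g \<in> G \<Longrightarrow> h \<in> G \<Longrightarrow> g \<circ> h \<in> G"
    using assms unfolding finite_subgroup_PAut_def by auto
  define M where "M = x2_weight ` G"
  have "finite M"
    using \<open>finite G\<close> unfolding M_def by simp
  moreover have "0 \<notin> M"
    using \<open>G \<subseteq> PAut_gr\<close> PAut_gr_X2(2)[where 'k = 'k] unfolding M_def by auto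
  moreover have "u * v \<in> M" if uv: "u \<in> M" "v \<in> M" for u v
  proof -
    obtain g h where "g \<in> G" "h \<in> G" "u = x2_weight g" "v = x2_weight h"
      using uv unfolding M_def by blast
    then have "u * v = x2_weight (g \<circ> h)"
      using x2_weight_comp \<open>G \<subseteq> PAut_gr\<close> by (metis subsetD)
    then show ?thesis
      using comp \<open>g \<in> G\<close> \<open>h \<in> G\<close> unfolding M_def by blast
  qed
  ultimately have "\<exists>n>0. u ^ n = 1" if "u \<in> M" for u
    using that by (rule power_eq_one_if_mult_closed)
  then obtain m where "0 < m" and kills: "\<And>u. u \<in> M \<Longrightarrow> u ^ m = 1"
    and least: "\<And>j. (\<And>u. u \<in> M \<Longrightarrow> u ^ j = 1) \<Longrightarrow> m dvd j"
    using exponent_exists[OF \<open>finite M\<close>] by blast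
  show thesis
  proof (rule that[OF \<open>0 < m\<close>])
    show "x2_weight g ^ m = 1" if "g \<in> G" for g
      using kills that unfolding M_def by simp
    show "m dvd j" if "\<And>g. g \<in> G \<Longrightarrow> x2_weight g ^ j = 1" for j
      using that by (intro least) (auto simp: M_def)
  qed
qed

lemma X2_power_invariant:
  fixes G :: "('k::field_char_0 P3 \<Rightarrow> 'k P3) set"
  assumes "G \<subseteq> PAut_gr" "\<And>g. g \<in> G \<Longrightarrow> g X1 = X1" "\<And>g. g \<in> G \<Longrightarrow> x2_weight g ^ m = 1"
  shows "X2 ^ m \<in> invariants G"
proof -
  have "g (Poly_Mapping.single (0, m, 0) 1) = Poly_Mapping.single (0, m, 0) 1" if "g \<in> G" for g
  proof -
    have "g \<in> PAut_gr"
      using assms(1) that by blast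
    then have "is_alg_hom g"
      unfolding PAut_gr_def by blast
    then show ?thesis
      using diagonal_action_single[OF _ assms(2)[OF that] PAut_gr_X2(1)[OF \<open>g \<in> PAut_gr\<close>]] assms(3)[OF that]
      by simp
  qed
  then show ?thesis
    by (simp add: invariants_def X2_def single_power)
qed

lemma invariant_keys_x2_weight:
  fixes G :: "('k::field_char_0 P3 \<Rightarrow> 'k P3) set"
  assumes "G \<subseteq> PAut_gr" "\<And>g. g \<in> G \<Longrightarrow> g X1 = X1" "f \<in> invariants G"
    and no_x3: "\<And>k. k \<in> Poly_Mapping.keys f \<Longrightarrow> snd (snd k) = 0"
    and "(a, b, 0) \<in> Poly_Mapping.keys f" "g \<in> G"
  shows "x2_weight g ^ b = 1"
proof -
  have "g \<in> PAut_gr"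
    using assms(1,6) by blast
  then have "Poly_Mapping.lookup (g f) (a, b, 0) = Poly_Mapping.lookup f (a, b, 0) * x2_weight g ^ b"
    using lookup_diagonal_action[OF _ assms(2)[OF \<open>g \<in> G\<close>] PAut_gr_X2(1)[OF \<open>g \<in> PAut_gr\<close>]
        no_x3]
    by (simp add: PAut_gr_def)
  moreover have "g f = f"
    using assms(3,6) by (simp add: invariants_def)
  ultimately show ?thesis
    using assms(5) by (simp add: in_keys_iff)
qed

lemma invariant_poly_casimir:
  fixes G :: "('k::field_char_0 P3 \<Rightarrow> 'k P3) set"
  assumes "G \<subseteq> PAut_gr" "\<And>g. g \<in> G \<Longrightarrow> g X1 = X1" "0 < m"
    and "\<And>j. (\<And>g. g \<in> G \<Longrightarrow> x2_weight g ^ j = 1) \<Longrightarrow> m dvd j"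
    and "poly_casimir 1 p \<in> invariants G"
  shows "\<exists>q. poly_casimir 1 p = poly_casimir m q"
proof (rule poly_casimir_if_keys[OF \<open>0 < m\<close>])
  fix k assume k: "k \<in> Poly_Mapping.keys (poly_casimir 1 p)"
  obtain j where "k = (2 * j, j, 0)"
    using keys_poly_casimir[OF k] by metis
  have no_x3: "snd (snd k') = 0" if "k' \<in> Poly_Mapping.keys (poly_casimir 1 p)" for k'
    using keys_poly_casimir[OF that] by (metis snd_conv)
  have "x2_weight g ^ j = 1" if "g \<in> G" for g
    using invariant_keys_x2_weight[of G "poly_casimir 1 p" "2 * j" j g] assms(1,2,5) no_x3 k that
    unfolding \<open>k = (2 * j, j, 0)\<close> by blast
  then obtain t where "j = m * t"
    using assms(4) by (meson dvdE)
  then show "\<exists>t. k = (2 * (m * t), m * t, 0)"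
    using \<open>k = (2 * j, j, 0)\<close> by simp
qed

theorem lemma3p2p2:
  fixes G :: "('k::field_char_0 P3 \<Rightarrow> 'k P3) set"
  assumes "alg_closed_type TYPE('k)"
    and "finite_subgroup_PAut G"
    and "G \<noteq> {id}"
    and "G = gen_group {g \<in> G. poisson_reflection g}"
  shows "\<not> poisson_iso_to_P (invariants G)"
proof
  assume iso: "poisson_iso_to_P (invariants G)"
  have "G \<subseteq> PAut_gr"
    using assms(2) unfolding finite_subgroup_PAut_def by blast
  have fixes_X1: "g X1 = X1" if "g \<in> G" for g
    using reflection_group_fixes_X1[OF \<open>G \<subseteq> PAut_gr\<close> assms(4) that] .
  have "{g \<in> G. poisson_reflection g} \<noteq> {}"
    using assms(3,4) gen_group_empty by metis
  then obtain r where "r \<in> G" "poisson_reflection r"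
    by blast
  obtain m where "0 < m" and m_kills: "\<And>g. g \<in> G \<Longrightarrow> x2_weight g ^ m = 1"
    and m_divides: "\<And>j. (\<And>g. g \<in> G \<Longrightarrow> x2_weight g ^ j = 1) \<Longrightarrow> m dvd j"
    using x2_weight_exponent[OF assms(2)] by blast
  have "m \<noteq> 1"
    using m_kills[OF \<open>r \<in> G\<close>] poisson_reflection_on_variables(2)[OF \<open>poisson_reflection r\<close>] by auto
  with \<open>0 < m\<close> have "2 \<le> m"
    by simp
  obtain \<psi> where \<psi>: "poisson_iso_from_subalgebra (invariants G) \<psi>"
    using poisson_iso_from_invariants[OF \<open>G \<subseteq> PAut_gr\<close> iso] .
  have "X1 \<in> invariants G"
    using fixes_X1 by (simp add: invariants_def)
  moreover have "X2 ^ m \<in> invariants G"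
    using \<open>G \<subseteq> PAut_gr\<close> fixes_X1 m_kills by (rule X2_power_invariant)
  moreover have "\<exists>q. poly_casimir 1 p = poly_casimir m q" if "poly_casimir 1 p \<in> invariants G" for p
    using \<open>G \<subseteq> PAut_gr\<close> fixes_X1 \<open>0 < m\<close> m_divides that by (rule invariant_poly_casimir)
  ultimately show False
    by (rule poisson_iso_from_subalgebra.no_casimir_root[OF \<psi> _ _ \<open>2 \<le> m\<close>])
qed

end
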